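(* Let $\mathbb{S}:=\mathbb{R}/\mathbb{Z}$ and let $\gamma_{3_1}:\mathbb{S}\to\mathbb{R}^3$ be the ideal trefoil, parameterized with constant speed such that $\gamma_{3_1}(0)$ is the outer point of the trefoil on a symmetry axis. Assume: (i) $\gamma_{3_1}$ admits a contact function $\sigma$ (see context); (ii) $\gamma_{3_1}$ is symmetric under a $120^\circ$ rotation about an axis and under three $180^\circ$ rotations about axes perpendicular to it; (iii) with $s_i:=\sigma^i(0)$, the tuple $b_9=(s_0,\dots,s_8)$ is a nine-cycle, i.e. $\sigma^9(0)=0$, and as the parameter runs from $0$ to $1$ the curve passes through the points $s_i$ in the order $s_0,s_7,s_5,s_3,s_1,s_8,s_6,s_4,s_2$. Then for indices $i,j$ (taken mod $9$), $\sigma$ maps the parameter interval $[s_i,s_j]$ onto $[s_{i+1},s_{j+1}]$. In particular, defining the pieces $\beta_1:=\gamma_{3_1}|_{[s_0,s_7]}$, $\beta_2:=\gamma_{3_1}|_{[s_6,s_4]}$, $\beta_3:=\gamma_{3_1}|_{[s_3,s_1]}$, $\tilde\beta_1:=\gamma_{3_1}|_{[s_2,s_0]}$, $\tilde\beta_2:=\gamma_{3_1}|_{[s_8,s_6]}$, $\tilde\beta_3:=\gamma_{3_1}|_{[s_5,s_3]}$, $\alpha_1:=\gamma_{3_1}|_{[s_1,s_8]}$, $\alpha_2:=\gamma_{3_1}|_{[s_7,s_5]}$, $\alpha_3:=\gamma_{3_1}|_{[s_4,s_2]}$, following the contact in the $\sigma$ direction gives the sequence $\alpha_1\to\tilde\beta_1\to\beta_3\to\alpha_3\to\tilde\beta_3\to\beta_2\to\alpha_2\to\tilde\beta_2\to\beta_1\to\alpha_1$,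 each piece being in one-to-one contact with the next.
   Context: For a $C^1$ closed curve $\gamma:\mathbb{S}\to\mathbb{R}^3$, the thickness is $\Delta[\gamma]:=\inf R(\gamma(s),\gamma(\sigma),\gamma(\tau))$ over pairwise distinct $s,\sigma,\tau\in\mathbb{S}$, where $R(x,y,z)$ is the radius of the smallest circle through $x,y,z$. The ideal trefoil minimizes length divided by thickness in the trefoil knot class. Parameters $s,t$ are in contact if $|\gamma(t)-\gamma(s)|=2\Delta[\gamma]$ and $\gamma(t)-\gamma(s)$ is orthogonal to $\gamma'(s)$ and $\gamma'(t)$. A contact function is a continuous, bijective, orientation-preserving map $\sigma:\mathbb{S}\to\mathbb{S}$ such that $\gamma_{3_1}(s)-\gamma_{3_1}(\sigma(s))$ is a contact chord for every $s$. Intervals $[a,b]$ in $\mathbb{S}$ denote the arc from $a$ to $b$ in the positive direction; $\sigma^i$ is the $i$-fold composition. *)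

theory Defs
  imports "HOL-Analysis.Analysis" "HOL-Analysis.Cross3"
begin

text \<open>The circle S = R/Z is represented through 1-periodic objects on the reals.
A closed curve S -> R^3 is a 1-periodic map real => real^3.\<close>

definition closed_curve :: "(real \<Rightarrow> real^3) \<Rightarrow> bool" where
  "closed_curve \<gamma> \<longleftrightarrow> (\<forall>t. \<gamma> (t + 1) = \<gamma> t)"

definition C1_closed_curve :: "(real \<Rightarrow> real^3) \<Rightarrow> bool" where
  "C1_closed_curve \<gamma> \<longleftrightarrow> closed_curve \<gamma> \<and> \<gamma> C1_differentiable_on UNIV"

text \<open>Radius of the smallest circle through x, y, z (infinite for three distinct
collinear points, half the distance if two points coincide, 0 if all coincide).\<close>
definition circ_radius :: "real^3 \<Rightarrow> real^3 \<Rightarrow> real^3 \<Rightarrow> ereal" where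
  "circ_radius x y z =
     (if x = y \<and> y = z then 0
      else if x = y then ereal (dist x z / 2)
      else if y = z then ereal (dist x y / 2)
      else if x = z then ereal (dist x y / 2)
      else if cross3 (y - x) (z - x) = 0 then \<infinity>
      else ereal (dist x y * dist y z * dist z x / (2 * norm (cross3 (y - x) (z - x)))))"

definition thickness :: "(real \<Rightarrow> real^3) \<Rightarrow> ereal" where
  "thickness \<gamma> = Inf {circ_radius (\<gamma> s) (\<gamma> t) (\<gamma> u) | s t u.
      s \<in> {0..<1} \<and> t \<in> {0..<1} \<and> u \<in> {0..<1} \<and> s \<noteq> t \<and> t \<noteq> u \<and> s \<noteq> u}"

definition curve_length :: "(real \<Rightarrow> real^3) \<Rightarrow> real" where
  "curve_length \<gamma> = integral {0..1} (\<lambda>t. norm (vector_derivative \<gamma> (at t)))"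

definition std_trefoil :: "real \<Rightarrow> real^3" where
  "std_trefoil u = (let t = 2 * pi * u in
     vector [sin t + 2 * sin (2 * t), cos t - 2 * cos (2 * t), - sin (3 * t)])"

definition ambient_isotopic :: "(real^3) set \<Rightarrow> (real^3) set \<Rightarrow> bool" where
  "ambient_isotopic A B \<longleftrightarrow>
     (\<exists>H :: real \<Rightarrow> real^3 \<Rightarrow> real^3.
        continuous_on ({0..1} \<times> UNIV) (\<lambda>(t, x). H t x) \<and>
        (\<forall>t\<in>{0..1}. \<exists>g. homeomorphism UNIV UNIV (H t) g) \<and>
        H 0 = id \<and> H 1 ` A = B)"

definition in_trefoil_class :: "(real \<Rightarrow> real^3) \<Rightarrow> bool" where
  "in_trefoil_class \<gamma> \<longleftrightarrow> closed_curve \<gamma> \<and> inj_on \<gamma> {0..<1} \<and>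
     ambient_isotopic (\<gamma> ` {0..<1}) (std_trefoil ` {0..<1})"

definition ideal_trefoil :: "(real \<Rightarrow> real^3) \<Rightarrow> bool" where
  "ideal_trefoil \<gamma> \<longleftrightarrow> C1_closed_curve \<gamma> \<and> in_trefoil_class \<gamma> \<and>
     (\<exists>d. thickness \<gamma> = ereal d \<and> d > 0 \<and>
        (\<forall>\<eta> d'. C1_closed_curve \<eta> \<and> in_trefoil_class \<eta> \<and> thickness \<eta> = ereal d' \<and> d' > 0
           \<longrightarrow> curve_length \<gamma> / d \<le> curve_length \<eta> / d'))"

definition constant_speed :: "(real \<Rightarrow> real^3) \<Rightarrow> bool" where
  "constant_speed \<gamma> \<longleftrightarrow> (\<exists>c. \<forall>t. norm (vector_derivative \<gamma> (at t)) = c)"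

definition in_contact :: "(real \<Rightarrow> real^3) \<Rightarrow> real \<Rightarrow> real \<Rightarrow> bool" where
  "in_contact \<gamma> s t \<longleftrightarrow>
     norm (\<gamma> t - \<gamma> s) = 2 * real_of_ereal (thickness \<gamma>) \<and>
     (\<gamma> t - \<gamma> s) \<bullet> vector_derivative \<gamma> (at s) = 0 \<and>
     (\<gamma> t - \<gamma> s) \<bullet> vector_derivative \<gamma> (at t) = 0"

text \<open>Continuous bijective orientation-preserving maps S -> S are represented by their
lifts: continuous, strictly increasing maps real => real with F(t+1) = F(t) + 1.\<close>
definition circle_op_homeo_lift :: "(real \<Rightarrow> real) \<Rightarrow> bool" where
  "circle_op_homeo_lift F \<longleftrightarrow> continuous_on UNIV F \<and> strict_mono F \<and> (\<forall>t. F (t + 1) = F t + 1)"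

definition contact_function :: "(real \<Rightarrow> real^3) \<Rightarrow> (real \<Rightarrow> real) \<Rightarrow> bool" where
  "contact_function \<gamma> \<sigma> \<longleftrightarrow> circle_op_homeo_lift \<sigma> \<and> (\<forall>s. in_contact \<gamma> s (\<sigma> s))"

text \<open>Rotation by angle th about the axis through p with unit direction u (Rodrigues).\<close>
definition rot :: "real^3 \<Rightarrow> real^3 \<Rightarrow> real \<Rightarrow> real^3 \<Rightarrow> real^3" where
  "rot p u th x = p + (cos th *\<^sub>R (x - p) + sin th *\<^sub>R cross3 u (x - p)
                       + ((1 - cos th) * (u \<bullet> (x - p))) *\<^sub>R u)"

definition trefoil_symmetric_outer0 :: "(real \<Rightarrow> real^3) \<Rightarrow> bool" where
  "trefoil_symmetric_outer0 \<gamma> \<longleftrightarrow>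
    (\<exists>p u v1 v2 v3. norm u = 1 \<and> norm v1 = 1 \<and> norm v2 = 1 \<and> norm v3 = 1 \<and>
       u \<bullet> v1 = 0 \<and> u \<bullet> v2 = 0 \<and> u \<bullet> v3 = 0 \<and>
       v1 \<noteq> v2 \<and> v1 \<noteq> - v2 \<and> v1 \<noteq> v3 \<and> v1 \<noteq> - v3 \<and> v2 \<noteq> v3 \<and> v2 \<noteq> - v3 \<and>
       rot p u (2 * pi / 3) ` range \<gamma> = range \<gamma> \<and>
       rot p v1 pi ` range \<gamma> = range \<gamma> \<and>
       rot p v2 pi ` range \<gamma> = range \<gamma> \<and>
       rot p v3 pi ` range \<gamma> = range \<gamma> \<and>
       (\<exists>c. \<gamma> 0 = p + c *\<^sub>R v1) \<and>
       (\<forall>t c. \<gamma> t = p + c *\<^sub>R v1 \<longrightarrow>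
          infdist (\<gamma> t) (range (\<lambda>r. p + r *\<^sub>R u)) \<le> infdist (\<gamma> 0) (range (\<lambda>r. p + r *\<^sub>R u))))"

text \<open>Positive arc [a,b] of S, as a 1-periodic set of reals.\<close>
definition arc :: "real \<Rightarrow> real \<Rightarrow> real set" where
  "arc a b = {t. frac (t - a) \<le> frac (b - a)}"

end

theory Submission
  imports Defs
begin

text \<open>An orientation-preserving homeomorphism of the circle maps each positive arc onto the
positive arc between the image endpoints. Since \<open>\<sigma>\<close> sends \<open>s\<^sub>i\<close> to \<open>s\<^sub>i\<^sub>+\<^sub>1\<close>, it maps
\<open>[s\<^sub>i, s\<^sub>j]\<close> onto \<open>[s\<^sub>i\<^sub>+\<^sub>1, s\<^sub>j\<^sub>+\<^sub>1]\<close>, and the nine-cycle \<open>s\<^sub>9 = s\<^sub>0\<close> closes up the chain of pieces.\<close>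

lemma degree_one_add_of_int:
  assumes periodic: "\<And>t. F (t + 1) = F t + 1"
  shows "F (x + of_int m) = F x + of_int m"
proof (induction m arbitrary: x rule: int_induct[where k = 0])
  case base then show ?case by simp
next
  case (step1 m)
  then show ?case using periodic[of "x + of_int m"] by (simp add: algebra_simps)
next
  case (step2 m)
  then show ?case using periodic[of "x + of_int (m - 1)"] by (simp add: algebra_simps)
qed

lemma circle_op_homeo_lift_surj:
  assumes "circle_op_homeo_lift F"
  shows "surj F"
proof -
  have cont: "continuous_on UNIV F" and periodic: "\<And>t. F (t + 1) = F t + 1"
    using assms unfolding circle_op_homeo_lift_def by blast+
  have "\<exists>x. F x = y" for y
  proof -
    define k where "k = \<lfloor>y - F 0\<rfloor>"
    have "F (of_int k) = F 0 + of_int k" "F (of_int k + 1) = F 0 + of_int k + 1"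
      using degree_one_add_of_int[where F = F, OF periodic, of 0] periodic by simp_all
    then have "F (of_int k) \<le> y" "y \<le> F (of_int k + 1)"
      unfolding k_def by linarith+
    then show ?thesis
      using IVT'[of F "of_int k" y "of_int k + 1"] continuous_on_subset[OF cont] by auto
  qed
  then show ?thesis by (metis surjI)
qed

lemma circle_op_homeo_lift_frac_diff:
  assumes "circle_op_homeo_lift F"
  shows "frac (F t - F a) = F (a + frac (t - a)) - F a"
proof -
  have mono: "strict_mono F" and periodic: "\<And>t. F (t + 1) = F t + 1"
    using assms unfolding circle_op_homeo_lift_def by blast+
  define e where "e = frac (t - a)"
  have "t = (a + e) + of_int \<lfloor>t - a\<rfloor>" by (simp add: e_def frac_def)
  then have "F t = F (a + e) + of_int \<lfloor>t - a\<rfloor>"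
    by (metis degree_one_add_of_int[where F = F, OF periodic])
  then have "frac (F t - F a) = frac (F (a + e) - F a)"
    using frac_add_int_right[of "of_int \<lfloor>t - a\<rfloor>" "F (a + e) - F a"] by (simp add: algebra_simps)
  also have "\<dots> = F (a + e) - F a"
  proof -
    have "F a \<le> F (a + e)" "F (a + e) < F (a + 1)"
      using mono frac_ge_0[of "t - a"] frac_lt_1[of "t - a"] unfolding e_def
      by (simp_all add: strict_mono_less_eq strict_mono_less)
    then show ?thesis using periodic[of a] by (simp add: frac_eq)
  qed
  finally show ?thesis unfolding e_def .
qed

lemma circle_op_homeo_lift_mem_arc_iff:
  assumes "circle_op_homeo_lift F"
  shows "F t \<in> arc (F a) (F b) \<longleftrightarrow> t \<in> arc a b"
proof -
  have mono: "strict_mono F" using assms unfolding circle_op_homeo_lift_def by blast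
  have "F t \<in> arc (F a) (F b) \<longleftrightarrow> F (a + frac (t - a)) \<le> F (a + frac (b - a))"
    unfolding arc_def by (simp add: circle_op_homeo_lift_frac_diff[OF assms])
  also have "\<dots> \<longleftrightarrow> t \<in> arc a b"
    unfolding arc_def using mono by (simp add: strict_mono_less_eq)
  finally show ?thesis .
qed

lemma circle_op_homeo_lift_image_arc:
  assumes "circle_op_homeo_lift F"
  shows "F ` arc a b = arc (F a) (F b)"
proof
  show "F ` arc a b \<subseteq> arc (F a) (F b)"
    using circle_op_homeo_lift_mem_arc_iff[OF assms] by blast
  show "arc (F a) (F b) \<subseteq> F ` arc a b"
  proof
    fix u assume u: "u \<in> arc (F a) (F b)"
    obtain t where "u = F t" using circle_op_homeo_lift_surj[OF assms] by (metis surjD)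
    with u show "u \<in> F ` arc a b" using circle_op_homeo_lift_mem_arc_iff[OF assms] by blast
  qed
qed

lemma arc_cong_Ints:
  assumes "a - a' \<in> \<int>" "b - b' \<in> \<int>"
  shows "arc a b = arc a' b'"
proof -
  have "a' - a \<in> \<int>" using Ints_minus[OF assms(1)] by simp
  then have "frac (x - a) = frac (x - a')" for x
    using frac_add_int_right[of "a' - a" "x - a'"] by simp
  moreover have "frac (b - a') = frac (b' - a')"
    using frac_add_int_right[OF assms(2), of "b' - a'"] by simp
  ultimately show ?thesis unfolding arc_def by simp
qed

theorem lemma6:
  fixes \<gamma> :: "real \<Rightarrow> real^3" and \<sigma> :: "real \<Rightarrow> real"
  defines "s \<equiv> \<lambda>i::nat. (\<sigma> ^^ i) 0"
  assumes ideal: "ideal_trefoil \<gamma>"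
    and speed: "constant_speed \<gamma>"
    and sym: "trefoil_symmetric_outer0 \<gamma>"
    and contact: "contact_function \<gamma> \<sigma>"
    and cycle: "s 9 \<in> \<int>"
    and order: "0 < frac (s 7) \<and> frac (s 7) < frac (s 5) \<and> frac (s 5) < frac (s 3) \<and>
                frac (s 3) < frac (s 1) \<and> frac (s 1) < frac (s 8) \<and> frac (s 8) < frac (s 6) \<and>
                frac (s 6) < frac (s 4) \<and> frac (s 4) < frac (s 2)"
  shows "(\<forall>i<9. \<forall>j<9. \<sigma> ` arc (s i) (s j) = arc (s (i + 1)) (s (j + 1)))
    \<and> \<sigma> ` arc (s 1) (s 8) = arc (s 2) (s 0)
    \<and> \<sigma> ` arc (s 2) (s 0) = arc (s 3) (s 1)
    \<and> \<sigma> ` arc (s 3) (s 1) = arc (s 4) (s 2)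
    \<and> \<sigma> ` arc (s 4) (s 2) = arc (s 5) (s 3)
    \<and> \<sigma> ` arc (s 5) (s 3) = arc (s 6) (s 4)
    \<and> \<sigma> ` arc (s 6) (s 4) = arc (s 7) (s 5)
    \<and> \<sigma> ` arc (s 7) (s 5) = arc (s 8) (s 6)
    \<and> \<sigma> ` arc (s 8) (s 6) = arc (s 0) (s 7)
    \<and> \<sigma> ` arc (s 0) (s 7) = arc (s 1) (s 8)
    \<and> (\<forall>t. in_contact \<gamma> t (\<sigma> t)) \<and> inj \<sigma>"
proof -
  have lift: "circle_op_homeo_lift \<sigma>" and touching: "\<forall>t. in_contact \<gamma> t (\<sigma> t)"
    using contact unfolding contact_function_def by blast+
  have shift: "\<sigma> ` arc (s i) (s j) = arc (s i') (s j')" if "i' = Suc i" "j' = Suc j" for i j i' j'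
    using circle_op_homeo_lift_image_arc[OF lift] that by (simp add: s_def)
  have "s 0 = 0" by (simp add: s_def)
  then have "arc (s 2) (s 9) = arc (s 2) (s 0)" "arc (s 9) (s 7) = arc (s 0) (s 7)"
    using arc_cong_Ints[of "s 2" "s 2" "s 9" "s 0"] arc_cong_Ints[of "s 9" "s 0" "s 7" "s 7"] cycle
    by simp_all
  moreover have "inj \<sigma>"
    using lift unfolding circle_op_homeo_lift_def by (simp add: strict_mono_imp_inj_on)
  ultimately show ?thesis
    using shift[of 2 1 9 8] shift[of 3 2 1 0] shift[of 4 3 2 1] shift[of 5 4 3 2] shift[of 6 5 4 3]
      shift[of 7 6 5 4] shift[of 8 7 6 5] shift[of 9 8 7 6] shift[of 1 0 8 7] shift[OF refl refl]
      touching
    by simp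
qed

end
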